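(* Let $n\ge1$, let $G$ be a simple graph on $[n]$, and let $\mathcal{S}_{n,G}$ be the arrangement in $\mathbb{R}^n$ consisting of the hyperplanes $x_i-x_j=0$ for all $1\le i<j\le n$ and $x_i-x_j=1$ for all $1\le i<j\le n$ with $\{i,j\}\in G$. The map $\sigma_{n,G}$ (defined below) is a bijection between the regions of $\mathcal{S}_{n,G}$ and the parking functions $f=(a_1,\ldots,a_n)$ on $[n]$ satisfying the following condition: for every $i$, if there exists $j>i$ with $a_i=a_j$ and $j$ is the smallest such integer, then $\{i,j\}\in G$.
   Context: A region of an arrangement is a connected component of the complement of the union of its hyperplanes. A parking function on $[n]$ is a map $f:[n]\to[n]$, written $(a_1,\ldots,a_n)$ with $a_i=f(i)$, such that $|f^{-1}(\{1,\ldots,j\})|\ge j$ for all $1\le j\le n$. For a region $R$ of $\mathcal{S}_{n,G}$, let $w=w_1\cdots w_n$ be the unique permutation of $[n]$ with $x_{w_1}>\cdots>x_{w_n}$ on $R$; the position of $m$ is the index $p$ with $w_p=m$. Draw an arc from $i$ to $j$ whenever $i<j$, $\{i,j\}\in G$, and $x_i-x_j>1$ holds on $R$. Then remove every arc $(i,l)$ for which there is a different arc $(j,k)$ with $i$ weakly left of $j$ and $k$ weakly left of $l$ in $w$. The remaining arcs partition $[n]$ into chains (connected components) of increasing integers. The map $\sigma_{n,G}$ sends $R$ to $f$ with $f(i)$ equal to the position in $w$ of the leftmost element of the chain containing $i$. *)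

theory Defs
  imports "HOL-Analysis.Analysis"
begin

text \<open>Points of R^n are modelled as functions nat => real that vanish outside {1..n}
  (a subspace of the product topology homeomorphic to Euclidean n-space).\<close>

definition simple_graph_on :: "nat \<Rightarrow> nat set set \<Rightarrow> bool" where
  "simple_graph_on n G \<longleftrightarrow> G \<subseteq> {{i, j} | i j. 1 \<le> i \<and> i < j \<and> j \<le> n}"

definition S_complement :: "nat \<Rightarrow> nat set set \<Rightarrow> (nat \<Rightarrow> real) set" where
  "S_complement n G = {x. (\<forall>i. i \<notin> {1..n} \<longrightarrow> x i = 0)
     \<and> (\<forall>i j. 1 \<le> i \<and> i < j \<and> j \<le> n \<longrightarrow> x i - x j \<noteq> 0)
     \<and> (\<forall>i j. 1 \<le> i \<and> i < j \<and> j \<le> n \<and> {i, j} \<in> G \<longrightarrow> x i - x j \<noteq> 1)}"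

definition S_regions :: "nat \<Rightarrow> nat set set \<Rightarrow> (nat \<Rightarrow> real) set set" where
  "S_regions n G = {connected_component_set (S_complement n G) x | x. x \<in> S_complement n G}"

definition region_word :: "nat \<Rightarrow> (nat \<Rightarrow> real) set \<Rightarrow> nat list" where
  "region_word n R = (THE w. distinct w \<and> set w = {1..n}
       \<and> (\<forall>x\<in>R. sorted_wrt (\<lambda>a b. x a > x b) w))"

text \<open>1-based position of m in w.\<close>
definition pos :: "nat list \<Rightarrow> nat \<Rightarrow> nat" where
  "pos w m = (THE p. 1 \<le> p \<and> p \<le> length w \<and> w ! (p - 1) = m)"

definition region_arcs :: "nat \<Rightarrow> nat set set \<Rightarrow> (nat \<Rightarrow> real) set \<Rightarrow> (nat \<times> nat) set" where
  "region_arcs n G R = {(i, j). 1 \<le> i \<and> i < j \<and> j \<le> n \<and> {i, j} \<in> G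
       \<and> (\<forall>x\<in>R. x i - x j > 1)}"

definition remaining_arcs :: "nat \<Rightarrow> nat set set \<Rightarrow> (nat \<Rightarrow> real) set \<Rightarrow> (nat \<times> nat) set" where
  "remaining_arcs n G R =
     (let w = region_word n R; A = region_arcs n G R in
      {(i, l) \<in> A. \<not> (\<exists>(j, k) \<in> A. (j, k) \<noteq> (i, l)
                         \<and> pos w i \<le> pos w j \<and> pos w k \<le> pos w l)})"

definition region_chain :: "nat \<Rightarrow> nat set set \<Rightarrow> (nat \<Rightarrow> real) set \<Rightarrow> nat \<Rightarrow> nat set" where
  "region_chain n G R i =
     {k. (i, k) \<in> (remaining_arcs n G R \<union> (remaining_arcs n G R)\<inverse>)\<^sup>*}"

definition sigma_nG :: "nat \<Rightarrow> nat set set \<Rightarrow> (nat \<Rightarrow> real) set \<Rightarrow> nat \<Rightarrow> nat" where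
  "sigma_nG n G R = (\<lambda>i. if i \<in> {1..n}
       then pos (region_word n R)
              (ARG_MIN (pos (region_word n R)) k. k \<in> region_chain n G R i)
       else 0)"

definition parking_function :: "nat \<Rightarrow> (nat \<Rightarrow> nat) \<Rightarrow> bool" where
  "parking_function n f \<longleftrightarrow> (\<forall>i\<in>{1..n}. f i \<in> {1..n}) \<and> (\<forall>i. i \<notin> {1..n} \<longrightarrow> f i = 0)
     \<and> (\<forall>j\<in>{1..n}. card {i \<in> {1..n}. f i \<le> j} \<ge> j)"

definition G_parking_functions :: "nat \<Rightarrow> nat set set \<Rightarrow> (nat \<Rightarrow> nat) set" where
  "G_parking_functions n G = {f. parking_function n f \<and>
     (\<forall>i\<in>{1..n}. (\<exists>j. i < j \<and> j \<le> n \<and> f i = f j) \<longrightarrow>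
        {i, LEAST j. i < j \<and> j \<le> n \<and> f i = f j} \<in> G)}"

end

theory Submission
  imports Defs
begin

text \<open>
  A region of \<open>S_{n,G}\<close> is determined by its sign pattern: the order of the coordinates
  (the word \<open>w\<close>) together with the set \<open>A\<close> of edges \<open>{i, j}\<close>, \<open>i < j\<close>, with
  \<open>x_i - x_j > 1\<close>. Every such sign is constant on a connected component, and two points with
  the same pattern are joined by a segment inside the complement.

  Let \<open>P\<close> be the position function of \<open>w\<close>. The undominated arcs are exactly the pairs of
  consecutive elements of the level sets of \<open>\<sigma>(R)\<close>, so \<open>\<sigma>(R)\<close> is a parking function
  satisfying the \<open>G\<close>-condition. Conversely \<open>\<sigma>(R)\<close> determines \<open>P\<close> position by position: a
  position either is a value of \<open>\<sigma>(R)\<close>, and then holds the least element of that level set,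
  or it is the end of an undominated arc, and non-nesting of these arcs leaves no choice. Since
  every arc is dominated by an undominated one, \<open>\<sigma>(R)\<close> then also determines \<open>A\<close>.

  For surjectivity, positions \<open>1, \<dots>, n\<close> are filled greedily: position \<open>q\<close> receives the
  least element of the level set of \<open>q\<close> if \<open>q\<close> is a value of \<open>f\<close>, and otherwise the
  successor of the earliest placed element whose successor is not yet placed; the parking
  condition guarantees that there is one. Heights realizing this order, with difference
  \<open>> 1\<close> exactly between positions whose interval contains the span of a consecutive pair,
  exist because that relation is a staircase.
\<close>

section \<open>Regions and sign patterns\<close>

lemma connected_sign_invariant:
  fixes g :: "'a::topological_space \<Rightarrow> real"
  assumes "connected T" "continuous_on T g" "\<forall>z\<in>T. g z \<noteq> c" "a \<in> T" "b \<in> T"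
  shows "c < g a \<longleftrightarrow> c < g b"
proof -
  have "connected (g ` T)" using assms(1,2) by (rule connected_continuous_image[rotated])
  moreover have "c \<notin> g ` T" using assms(3) by auto
  ultimately show ?thesis
    using assms(4,5) unfolding connected_iff_interval
    by (metis image_eqI linorder_neqE_linordered_idom order.strict_implies_order)
qed

lemma convex_combination_neq:
  fixes a b c u :: real
  assumes "0 \<le> u" "u \<le> 1" "a \<noteq> c" "b \<noteq> c" "c < a \<longleftrightarrow> c < b"
  shows "(1 - u) * a + u * b \<noteq> c"
  using assms convex_bound_le segment_bound_lemma by (smt (verit))

lemma S_complement_outside: "x \<in> S_complement n G \<Longrightarrow> i \<notin> {1..n} \<Longrightarrow> x i = 0"
  unfolding S_complement_def by blast

lemma S_complement_inj_on:
  assumes "x \<in> S_complement n G"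
  shows "inj_on x {1..n}"
proof (rule inj_onI)
  fix i j assume "i \<in> {1..n}" "j \<in> {1..n}" "x i = x j"
  then show "i = j" using assms unfolding S_complement_def by (cases i j rule: linorder_cases) force+
qed

lemma S_complement_diff_neq_1: "x \<in> S_complement n G \<Longrightarrow> 1 \<le> i \<Longrightarrow> i < j \<Longrightarrow> j \<le> n \<Longrightarrow> {i, j} \<in> G
    \<Longrightarrow> x i - x j \<noteq> 1"
  unfolding S_complement_def by blast

definition same_pattern :: "nat \<Rightarrow> nat set set \<Rightarrow> (nat \<Rightarrow> real) \<Rightarrow> (nat \<Rightarrow> real) \<Rightarrow> bool" where
  "same_pattern n G x y \<longleftrightarrow> (\<forall>i\<in>{1..n}. \<forall>j\<in>{1..n}. x i < x j \<longleftrightarrow> y i < y j)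
     \<and> (\<forall>i j. 1 \<le> i \<and> i < j \<and> j \<le> n \<and> {i, j} \<in> G \<longrightarrow> (1 < x i - x j \<longleftrightarrow> 1 < y i - y j))"

lemma continuous_on_coordinate_diff: "continuous_on T (\<lambda>z::nat \<Rightarrow> real. z i - z j)"
  by (intro continuous_on_diff continuous_on_subset[OF continuous_on_product_coordinates]) auto

lemma same_pattern_if_connected_component:
  assumes "y \<in> connected_component_set (S_complement n G) x"
  shows "same_pattern n G x y"
proof -
  obtain T where T: "connected T" "T \<subseteq> S_complement n G" "x \<in> T" "y \<in> T"
    using assms unfolding connected_component_def by blast
  have "x i < x j \<longleftrightarrow> y i < y j" if "i \<in> {1..n}" "j \<in> {1..n}" for i j
  proof (cases "i = j")
    case False
    then have "\<forall>z\<in>T. z j - z i \<noteq> 0"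
      using T(2) S_complement_inj_on that by (fastforce dest: inj_onD)
    then show ?thesis
      using connected_sign_invariant[OF T(1) continuous_on_coordinate_diff[of T j i] _ T(3,4), of 0]
      by simp
  qed simp
  moreover have "1 < x i - x j \<longleftrightarrow> 1 < y i - y j" if "1 \<le> i" "i < j" "j \<le> n" "{i, j} \<in> G" for i j
    using T(2) S_complement_diff_neq_1 that
    by (intro connected_sign_invariant[OF T(1) continuous_on_coordinate_diff _ T(3,4)]) blast
  ultimately show ?thesis unfolding same_pattern_def by blast
qed

lemma connected_component_if_same_pattern:
  assumes x: "x \<in> S_complement n G" and y: "y \<in> S_complement n G" and xy: "same_pattern n G x y"
  shows "y \<in> connected_component_set (S_complement n G) x"
proof -
  define \<gamma> where "\<gamma> u = (\<lambda>i. (1 - u) * x i + u * y i)" for u :: real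
  have "continuous_on {0..1} \<gamma>" unfolding \<gamma>_def
    by (intro continuous_on_coordinatewise_then_product continuous_intros)
  then have "connected (\<gamma> ` {0..1})" by (rule connected_continuous_image) simp
  moreover have "\<gamma> ` {0..1} \<subseteq> S_complement n G"
  proof
    fix z assume "z \<in> \<gamma> ` {0..1}"
    then obtain u where u: "0 \<le> u" "u \<le> 1" and z: "z = \<gamma> u" by auto
    have diff: "z i - z j = (1 - u) * (x i - x j) + u * (y i - y j)" for i j
      unfolding z \<gamma>_def by algebra
    have "z i - z j \<noteq> 0" if "1 \<le> i" "i < j" "j \<le> n" for i j
      using x y xy that unfolding diff S_complement_def same_pattern_def
      by (intro convex_combination_neq[OF u]) auto
    moreover have "z i - z j \<noteq> 1" if "1 \<le> i" "i < j" "j \<le> n" "{i, j} \<in> G" for i j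
      using x y xy that unfolding diff S_complement_def same_pattern_def
      by (intro convex_combination_neq[OF u]) auto
    moreover have "z i = 0" if "i \<notin> {1..n}" for i
      using S_complement_outside[OF x that] S_complement_outside[OF y that] by (simp add: z \<gamma>_def)
    ultimately show "z \<in> S_complement n G" unfolding S_complement_def by blast
  qed
  moreover have "x = \<gamma> 0" "y = \<gamma> 1" by (auto simp: \<gamma>_def)
  then have "x \<in> \<gamma> ` {0..1}" "y \<in> \<gamma> ` {0..1}" by auto
  ultimately have "connected_component (S_complement n G) x y" by (rule connected_componentI)
  then show ?thesis by simp
qed

lemma S_regions_memberD:
  assumes "R \<in> S_regions n G" "x \<in> R"
  shows "x \<in> S_complement n G" "R = connected_component_set (S_complement n G) x"
  using assms connected_component_eq connected_component_in unfolding S_regions_def by blast+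

lemma S_regions_nonempty: "R \<in> S_regions n G \<Longrightarrow> \<exists>x. x \<in> R"
  unfolding S_regions_def using connected_component_refl by blast

section \<open>The word of a region\<close>

lemma sorted_decreasing_distinct: "sorted_wrt (\<lambda>a b. x a > x b) w \<Longrightarrow> distinct w"
  for x :: "'a \<Rightarrow> 'b::order"
  by (induction w) auto

lemma sorted_decreasing_exists:
  fixes x :: "'a \<Rightarrow> 'b::linorder"
  assumes "finite S" "inj_on x S"
  shows "\<exists>w. set w = S \<and> sorted_wrt (\<lambda>a b. x a > x b) w"
proof -
  obtain xs where xs: "set xs = S" "distinct xs" using finite_distinct_list[OF assms(1)] by blast
  let ?w = "rev (sort_key x xs)"
  have "distinct (map x (sort_key x xs))" using xs assms(2) by (simp add: distinct_map)
  then have "sorted_wrt (<) (map x (sort_key x xs))" by (simp add: strict_sorted_iff)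
  then have "sorted_wrt (\<lambda>a b. x a > x b) ?w" by (simp add: sorted_wrt_rev sorted_wrt_map)
  moreover have "set ?w = S" using xs by simp
  ultimately show ?thesis by blast
qed

lemma sorted_decreasing_unique:
  fixes x :: "'a \<Rightarrow> 'b::linorder"
  assumes "sorted_wrt (\<lambda>a b. x a > x b) w1" "sorted_wrt (\<lambda>a b. x a > x b) w2"
    and "set w1 = set w2" "inj_on x (set w1)"
  shows "w1 = w2"
proof -
  have "sorted_wrt (<) (rev (map x w2))" "sorted_wrt (<) (rev (map x w1))"
    using assms(1,2) by (simp_all add: sorted_wrt_rev sorted_wrt_map)
  then have "rev (map x w1) = rev (map x w2)"
    by (rule strict_sorted_equal) (simp add: assms(3))
  then show ?thesis using assms(3,4) by (auto intro: map_inj_on)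
qed

lemma pos_nth:
  assumes "distinct w" "k < length w"
  shows "pos w (w ! k) = Suc k"
  unfolding pos_def
proof (rule the_equality)
  fix p assume p: "1 \<le> p \<and> p \<le> length w \<and> w ! (p - 1) = w ! k"
  then have "p - 1 = k" using assms nth_eq_iff_index_eq[OF assms(1)] by auto
  then show "p = Suc k" using p by auto
qed (use assms in auto)

lemma pos_less_iff_sorted:
  fixes x :: "nat \<Rightarrow> 'b::linorder"
  assumes "sorted_wrt (\<lambda>a b. x a > x b) w" "a \<in> set w" "b \<in> set w"
  shows "pos w a < pos w b \<longleftrightarrow> x b < x a"
proof -
  have "distinct w" using assms(1) by (rule sorted_decreasing_distinct)
  obtain k l where k: "k < length w" "a = w ! k" and l: "l < length w" "b = w ! l"
    using assms(2,3) by (metis in_set_conv_nth)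
  have "x b < x a \<longleftrightarrow> k < l"
  proof
    assume "x b < x a"
    then have "\<not> l < k" "l \<noteq> k" using sorted_wrt_nth_less[OF assms(1), of l k] k l by auto
    then show "k < l" by simp
  qed (use sorted_wrt_nth_less[OF assms(1)] k l in simp)
  then show ?thesis using pos_nth[OF \<open>distinct w\<close>] k l by simp
qed

lemma pos_mem:
  assumes "distinct w" "a \<in> set w"
  shows "pos w a \<in> {1..length w}"
  using assms pos_nth by (fastforce simp: in_set_conv_nth)

lemma inj_on_pos: "distinct w \<Longrightarrow> inj_on (pos w) (set w)"
  by (intro inj_onI) (metis in_set_conv_nth nat.inject pos_nth)

lemma list_eq_if_pos_eq:
  assumes "distinct w1" "distinct w2" "set w1 = set w2" "\<forall>a\<in>set w1. pos w2 a = pos w1 a"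
  shows "w1 = w2"
proof (rule nth_equalityI)
  show len: "length w1 = length w2" using assms(1-3) by (metis distinct_card)
  fix k assume k: "k < length w1"
  then have "pos w2 (w1 ! k) = Suc k" using assms(4) pos_nth[OF assms(1) k] by simp
  also have "\<dots> = pos w2 (w2 ! k)" using pos_nth[OF assms(2)] k len by simp
  finally show "w1 ! k = w2 ! k"
    by (rule inj_onD[OF inj_on_pos[OF assms(2)]]) (use k len assms(3) in auto)
qed

lemma region_word_sorted:
  assumes R: "R \<in> S_regions n G" and x: "x \<in> R"
  shows "set (region_word n R) = {1..n}" "sorted_wrt (\<lambda>a b. x a > x b) (region_word n R)"
proof -
  have xS: "x \<in> S_complement n G" and R_eq: "R = connected_component_set (S_complement n G) x"
    using S_regions_memberD[OF R x] by blast+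
  obtain w where w: "set w = {1..n}" "sorted_wrt (\<lambda>a b. x a > x b) w"
    using sorted_decreasing_exists[OF _ S_complement_inj_on[OF xS]] by blast
  have "sorted_wrt (\<lambda>a b. y a > y b) w" if "y \<in> R" for y
    using same_pattern_if_connected_component[of y n G x] that R_eq w
    by (intro sorted_wrt_mono_rel[OF _ w(2)]) (auto simp: same_pattern_def)
  then have "region_word n R = w"
    unfolding region_word_def
  proof (intro the_equality)
    fix w' assume "distinct w' \<and> set w' = {1..n} \<and> (\<forall>y\<in>R. sorted_wrt (\<lambda>a b. y a > y b) w')"
    then show "w' = w"
      using sorted_decreasing_unique[of x w' w] x w S_complement_inj_on[OF xS] by auto
  qed (use w sorted_decreasing_distinct in auto)
  then show "set (region_word n R) = {1..n}" "sorted_wrt (\<lambda>a b. x a > x b) (region_word n R)"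
    using w by simp_all
qed

lemma region_pos_less_iff:
  assumes "R \<in> S_regions n G" "x \<in> R" "a \<in> {1..n}" "b \<in> {1..n}"
  shows "pos (region_word n R) a < pos (region_word n R) b \<longleftrightarrow> x b < x a"
  using pos_less_iff_sorted[OF region_word_sorted(2)[OF assms(1,2)]] region_word_sorted(1)[OF assms(1,2)]
    assms(3,4) by simp

lemma region_pos_le_imp:
  assumes "R \<in> S_regions n G" "x \<in> R" "a \<in> {1..n}" "b \<in> {1..n}"
    and "pos (region_word n R) a \<le> pos (region_word n R) b"
  shows "x b \<le> x a"
  using region_pos_less_iff[OF assms(1,2,4,3)] assms(5) by (meson not_le)

lemma region_arcs_eq:
  assumes R: "R \<in> S_regions n G" and x: "x \<in> R"
  shows "region_arcs n G R = {(i, j). 1 \<le> i \<and> i < j \<and> j \<le> n \<and> {i, j} \<in> G \<and> x i - x j > 1}"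
  using S_regions_memberD[OF R x] x same_pattern_if_connected_component
  unfolding region_arcs_def same_pattern_def by blast

section \<open>Undominated arcs and their chains\<close>

definition undominated :: "(nat \<Rightarrow> nat) \<Rightarrow> (nat \<times> nat) set \<Rightarrow> (nat \<times> nat) set" where
  "undominated P A = {(i, l) \<in> A. \<not> (\<exists>(j, k) \<in> A. (j, k) \<noteq> (i, l) \<and> P i \<le> P j \<and> P k \<le> P l)}"

definition arc_chain :: "(nat \<Rightarrow> nat) \<Rightarrow> (nat \<times> nat) set \<Rightarrow> nat \<Rightarrow> nat set" where
  "arc_chain P A i = {k. (i, k) \<in> (undominated P A \<union> (undominated P A)\<inverse>)\<^sup>*}"

definition chain_map :: "nat \<Rightarrow> (nat \<Rightarrow> nat) \<Rightarrow> (nat \<times> nat) set \<Rightarrow> nat \<Rightarrow> nat" where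
  "chain_map n P A i = (if i \<in> {1..n} then P (ARG_MIN P k. k \<in> arc_chain P A i) else 0)"

lemma sigma_nG_eq_chain_map:
  "sigma_nG n G R = chain_map n (pos (region_word n R)) (region_arcs n G R)"
  unfolding sigma_nG_def chain_map_def arc_chain_def region_chain_def remaining_arcs_def
    undominated_def Let_def by (rule ext) simp

lemma undominated_subset: "undominated P A \<subseteq> A"
  unfolding undominated_def by auto

lemma undominatedD:
  "(i, l) \<in> undominated P A \<Longrightarrow> (j, k) \<in> A \<Longrightarrow> P i \<le> P j \<Longrightarrow> P k \<le> P l \<Longrightarrow> (j, k) = (i, l)"
  unfolding undominated_def by blast

lemma undominated_right_unique:
  assumes "(a, b) \<in> undominated P A" "(a, c) \<in> undominated P A"
  shows "b = c"
proof -
  have ab: "(a, b) \<in> A" and ac: "(a, c) \<in> A" using assms undominated_subset by blast+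
  have "P b \<le> P c \<or> P c \<le> P b" by linarith
  then show ?thesis
    using undominatedD[OF assms(2) ab order_refl] undominatedD[OF assms(1) ac order_refl] by auto
qed

lemma undominated_left_unique:
  assumes "(a, c) \<in> undominated P A" "(b, c) \<in> undominated P A"
  shows "a = b"
proof -
  have ac: "(a, c) \<in> A" and bc: "(b, c) \<in> A" using assms undominated_subset by blast+
  have "P a \<le> P b \<or> P b \<le> P a" by linarith
  then show ?thesis
    using undominatedD[OF assms(1) bc _ order_refl] undominatedD[OF assms(2) ac _ order_refl] by auto
qed

lemma undominated_nonnesting:
  assumes "(a, b) \<in> undominated P A" "(c, d) \<in> undominated P A" "P b < P d"
  shows "P a < P c"
proof (rule ccontr)
  assume "\<not> P a < P c"
  then have "P c \<le> P a" "P b \<le> P d" using assms(3) by simp_all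
  moreover have "(a, b) \<in> A" using assms(1) undominated_subset by blast
  ultimately have "(a, b) = (c, d)" using undominatedD[OF assms(2)] by blast
  then show False using assms(3) by simp
qed

lemma rtrancl_symmetric_closure_directed:
  assumes "single_valued r" "single_valued (r\<inverse>)" "(u, v) \<in> (r \<union> r\<inverse>)\<^sup>*"
  shows "(u, v) \<in> r\<^sup>* \<or> (v, u) \<in> r\<^sup>*"
  using assms(3)
proof (induction rule: rtrancl_induct)
  case (step v w)
  from step.hyps(2) consider "(v, w) \<in> r" | "(w, v) \<in> r" by blast
  then show ?case
  proof cases
    case 1
    show ?thesis
    proof (cases "(u, v) \<in> r\<^sup>* \<or> v = u")
      case False
      then obtain c where c: "(v, c) \<in> r" "(c, u) \<in> r\<^sup>*"
        using step.IH by (metis converse_rtranclE)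
      then have "c = w" using 1 single_valuedD[OF assms(1)] by blast
      then show ?thesis using c by simp
    qed (use 1 in auto)
  next
    case 2
    show ?thesis
    proof (cases "(v, u) \<in> r\<^sup>* \<or> u = v")
      case False
      then obtain c where c: "(u, c) \<in> r\<^sup>*" "(c, v) \<in> r"
        using step.IH by (metis rtranclE)
      then have "c = w" using 2 single_valuedD[OF assms(2)] by blast
      then show ?thesis using c by simp
    qed (use 2 in \<open>auto intro: converse_rtrancl_into_rtrancl\<close>)
  qed
qed simp

lemma rtrancl_exit:
  assumes "(a, b) \<in> r\<^sup>*" "a \<in> S" "b \<notin> S"
  shows "\<exists>x y. (x, y) \<in> r \<and> x \<in> S \<and> y \<notin> S"
  using assms by (induction rule: rtrancl_induct) blast+

definition consecutive_pairs :: "nat \<Rightarrow> (nat \<Rightarrow> 'a) \<Rightarrow> (nat \<times> nat) set" where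
  "consecutive_pairs n f =
     {(a, b). 1 \<le> a \<and> a < b \<and> b \<le> n \<and> f a = f b \<and> (\<forall>c. a < c \<and> c < b \<longrightarrow> f c \<noteq> f a)}"

lemma consecutive_pairs_right_unique:
  assumes "(a, b) \<in> consecutive_pairs n f" "(a, c) \<in> consecutive_pairs n f"
  shows "b = c"
proof (rule ccontr)
  assume "b \<noteq> c"
  then consider "b < c" | "c < b" by linarith
  then show False using assms unfolding consecutive_pairs_def by cases fastforce+
qed

lemma consecutive_pairs_left_unique:
  assumes "(a, c) \<in> consecutive_pairs n f" "(b, c) \<in> consecutive_pairs n f"
  shows "a = b"
proof (rule ccontr)
  assume "a \<noteq> b"
  then consider "a < b" | "b < a" by linarith
  then show False using assms unfolding consecutive_pairs_def by cases fastforce+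
qed

lemma consecutive_pairs_Least:
  assumes "i \<in> {1..n}" "\<exists>j. i < j \<and> j \<le> n \<and> f i = f j"
  shows "(i, LEAST j. i < j \<and> j \<le> n \<and> f i = f j) \<in> consecutive_pairs n f"
proof -
  define b where "b = (LEAST j. i < j \<and> j \<le> n \<and> f i = f j)"
  have b: "i < b \<and> b \<le> n \<and> f i = f b" unfolding b_def using assms(2) by (rule LeastI_ex)
  have "f c \<noteq> f i" if "i < c" "c < b" for c
    using Least_le[of "\<lambda>j. i < j \<and> j \<le> n \<and> f i = f j" c] that b unfolding b_def by fastforce
  then show ?thesis using assms(1) b unfolding consecutive_pairs_def b_def[symmetric] by auto
qed

lemma consecutive_pairs_eq_Least:
  assumes "(a, b) \<in> consecutive_pairs n f"
  shows "b = (LEAST j. a < j \<and> j \<le> n \<and> f a = f j)"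
  using assms consecutive_pairs_Least[of a n f] consecutive_pairs_right_unique[OF assms]
  unfolding consecutive_pairs_def by fastforce

lemma consecutive_pairs_connect:
  assumes "1 \<le> a" "a \<le> b" "b \<le> n" "f a = f b"
  shows "(a, b) \<in> (consecutive_pairs n f)\<^sup>*"
  using assms
proof (induction b rule: less_induct)
  case (less b)
  show ?case
  proof (cases "a = b")
    case False
    define S where "S = {j. a \<le> j \<and> j < b \<and> f j = f b}"
    define c where "c = Max S"
    have "finite S" "a \<in> S" using less.prems False unfolding S_def by auto
    then have "c \<in> S" "\<And>j. j \<in> S \<Longrightarrow> j \<le> c" unfolding c_def by (auto intro: Max_in Max_ge)
    then have c: "a \<le> c" "c < b" "f c = f b" and c_max: "\<And>j. a \<le> j \<Longrightarrow> j < b \<Longrightarrow> f j = f b \<Longrightarrow> j \<le> c"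
      unfolding S_def by auto
    have "f d \<noteq> f c" if "c < d" "d < b" for d using c_max[of d] c that by fastforce
    then have "(c, b) \<in> consecutive_pairs n f"
      using c less.prems unfolding consecutive_pairs_def by auto
    moreover have "(a, c) \<in> (consecutive_pairs n f)\<^sup>*"
      using less.IH[of c] c less.prems by simp
    ultimately show ?thesis by simp
  qed simp
qed

lemma consecutive_pairs_chain_iff:
  assumes "i \<in> {1..n}"
  shows "(i, k) \<in> (consecutive_pairs n f \<union> (consecutive_pairs n f)\<inverse>)\<^sup>* \<longleftrightarrow> k \<in> {1..n} \<and> f k = f i"
proof
  show "(i, k) \<in> (consecutive_pairs n f \<union> (consecutive_pairs n f)\<inverse>)\<^sup>* \<Longrightarrow> k \<in> {1..n} \<and> f k = f i"
    by (induction rule: rtrancl_induct) (use assms in \<open>auto simp: consecutive_pairs_def\<close>)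
next
  let ?C = "consecutive_pairs n f"
  assume k: "k \<in> {1..n} \<and> f k = f i"
  have "?C\<^sup>* \<subseteq> (?C \<union> ?C\<inverse>)\<^sup>*" "(?C\<inverse>)\<^sup>* \<subseteq> (?C \<union> ?C\<inverse>)\<^sup>*" by (simp_all add: rtrancl_mono)
  moreover have "(i, k) \<in> ?C\<^sup>* \<or> (k, i) \<in> ?C\<^sup>*"
    using consecutive_pairs_connect[of i k n f] consecutive_pairs_connect[of k i n f] assms k
    by (cases "i \<le> k") auto
  ultimately show "(i, k) \<in> (?C \<union> ?C\<inverse>)\<^sup>*" by (auto simp: rtrancl_converse)
qed

locale arc_system =
  fixes n :: nat and P :: "nat \<Rightarrow> nat" and A :: "(nat \<times> nat) set"
  assumes pos_mem: "a \<in> {1..n} \<Longrightarrow> P a \<in> {1..n}"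
    and inj_pos: "inj_on P {1..n}"
    and arc_forward: "(i, j) \<in> A \<Longrightarrow> 1 \<le> i \<and> i < j \<and> j \<le> n \<and> P i < P j"
begin

lemma pos_image: "P ` {1..n} = {1..n}"
  using inj_pos pos_mem by (intro endo_inj_surj) auto

lemma pos_eq_iff: "a \<in> {1..n} \<Longrightarrow> b \<in> {1..n} \<Longrightarrow> P a = P b \<longleftrightarrow> a = b"
  using inj_pos by (auto dest: inj_onD)

lemma card_pos_atMost:
  assumes "j \<le> n"
  shows "card {i \<in> {1..n}. P i \<le> j} = j"
proof -
  have "P ` {i \<in> {1..n}. P i \<le> j} = {1..j}"
  proof
    show "P ` {i \<in> {1..n}. P i \<le> j} \<subseteq> {1..j}" using pos_mem by fastforce
    show "{1..j} \<subseteq> P ` {i \<in> {1..n}. P i \<le> j}"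
    proof
      fix q assume q: "q \<in> {1..j}"
      then have "q \<in> P ` {1..n}" using pos_image assms by auto
      then show "q \<in> P ` {i \<in> {1..n}. P i \<le> j}" using q by auto
    qed
  qed
  moreover have "inj_on P {i \<in> {1..n}. P i \<le> j}" using inj_pos by (rule inj_on_subset) auto
  ultimately show ?thesis using card_image by fastforce
qed

lemma undominated_forward:
  "(i, j) \<in> undominated P A \<Longrightarrow> 1 \<le> i \<and> i < j \<and> j \<le> n \<and> P i < P j"
  using arc_forward undominated_subset by blast

lemma undominated_rtrancl_forward:
  "(a, b) \<in> (undominated P A)\<^sup>* \<Longrightarrow> a = b \<or> (a < b \<and> P a < P b \<and> a \<in> {1..n} \<and> b \<in> {1..n})"
  by (induction rule: rtrancl_induct) (auto dest: undominated_forward)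

lemma arc_chain_iff:
  "k \<in> arc_chain P A i \<longleftrightarrow> (i, k) \<in> (undominated P A)\<^sup>* \<or> (k, i) \<in> (undominated P A)\<^sup>*"
proof
  let ?U = "undominated P A"
  assume "k \<in> arc_chain P A i"
  moreover have "single_valued ?U"
    by (rule single_valuedI) (erule (1) undominated_right_unique)
  moreover have "single_valued (?U\<inverse>)"
    by (rule single_valuedI) (simp, erule (1) undominated_left_unique)
  ultimately show "(i, k) \<in> ?U\<^sup>* \<or> (k, i) \<in> ?U\<^sup>*"
    unfolding arc_chain_def by (simp add: rtrancl_symmetric_closure_directed)
next
  let ?U = "undominated P A"
  have "?U\<^sup>* \<subseteq> (?U \<union> ?U\<inverse>)\<^sup>*" "(?U\<inverse>)\<^sup>* \<subseteq> (?U \<union> ?U\<inverse>)\<^sup>*"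
    by (simp_all add: rtrancl_mono)
  moreover assume "(i, k) \<in> ?U\<^sup>* \<or> (k, i) \<in> ?U\<^sup>*"
  ultimately show "k \<in> arc_chain P A i"
    unfolding arc_chain_def by (auto simp: rtrancl_converse)
qed

lemma arc_chain_self: "i \<in> arc_chain P A i"
  by (simp add: arc_chain_iff)

lemma arc_chain_subset:
  assumes "i \<in> {1..n}"
  shows "arc_chain P A i \<subseteq> {1..n}"
proof
  fix k assume "k \<in> arc_chain P A i"
  then have "(i, k) \<in> (undominated P A)\<^sup>* \<or> (k, i) \<in> (undominated P A)\<^sup>*"
    by (simp add: arc_chain_iff)
  then show "k \<in> {1..n}" using assms undominated_rtrancl_forward by blast
qed

lemma arc_chain_eq:
  assumes "k \<in> arc_chain P A i"
  shows "arc_chain P A k = arc_chain P A i"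
proof -
  let ?S = "undominated P A \<union> (undominated P A)\<inverse>"
  have "sym (?S\<^sup>*)" by (intro sym_rtrancl) (auto simp: sym_def)
  moreover have "(i, k) \<in> ?S\<^sup>*" using assms unfolding arc_chain_def by simp
  ultimately have "(k, i) \<in> ?S\<^sup>*" "(i, k) \<in> ?S\<^sup>*" by (auto dest: symD)
  then show ?thesis unfolding arc_chain_def by (auto intro: rtrancl_trans)
qed

definition chain_head :: "nat \<Rightarrow> nat" where
  "chain_head i = (ARG_MIN P k. k \<in> arc_chain P A i)"

lemma chain_head_mem: "chain_head i \<in> arc_chain P A i"
  and chain_head_min: "k \<in> arc_chain P A i \<Longrightarrow> P (chain_head i) \<le> P k"
  unfolding chain_head_def using arg_min_nat_lemma[of "\<lambda>k. k \<in> arc_chain P A i" i P] arc_chain_self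
  by blast+

lemma chain_map_eq: "i \<in> {1..n} \<Longrightarrow> chain_map n P A i = P (chain_head i)"
  unfolding chain_map_def chain_head_def by simp

lemma chain_head_in_range: "i \<in> {1..n} \<Longrightarrow> chain_head i \<in> {1..n}"
  using chain_head_mem arc_chain_subset by blast

lemma chain_head_reaches:
  assumes "k \<in> arc_chain P A i"
  shows "(chain_head i, k) \<in> (undominated P A)\<^sup>*"
proof -
  have "k \<in> arc_chain P A (chain_head i)" using assms arc_chain_eq[OF chain_head_mem] by simp
  then have "(chain_head i, k) \<in> (undominated P A)\<^sup>* \<or> (k, chain_head i) \<in> (undominated P A)\<^sup>*"
    by (simp add: arc_chain_iff)
  then show ?thesis
    using chain_head_min[OF assms] undominated_rtrancl_forward by fastforce
qed

lemma chain_map_eq_iff: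
  assumes "i \<in> {1..n}" "j \<in> {1..n}"
  shows "chain_map n P A i = chain_map n P A j \<longleftrightarrow> j \<in> arc_chain P A i"
proof
  assume "chain_map n P A i = chain_map n P A j"
  then have "chain_head i = chain_head j"
    using assms chain_map_eq chain_head_in_range pos_eq_iff by metis
  then have "arc_chain P A i = arc_chain P A j"
    using arc_chain_eq[OF chain_head_mem[of i]] arc_chain_eq[OF chain_head_mem[of j]] by simp
  then show "j \<in> arc_chain P A i" using arc_chain_self by simp
next
  assume "j \<in> arc_chain P A i"
  then have "arc_chain P A j = arc_chain P A i" by (rule arc_chain_eq)
  then show "chain_map n P A i = chain_map n P A j" unfolding chain_map_def using assms by simp
qed

lemma chain_map_le_pos: "i \<in> {1..n} \<Longrightarrow> chain_map n P A i \<le> P i"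
  using chain_map_eq chain_head_min arc_chain_self by simp

lemma chain_map_mem: "i \<in> {1..n} \<Longrightarrow> chain_map n P A i \<in> {1..n}"
  using chain_map_eq chain_head_in_range pos_mem by simp

lemma undominated_consecutive:
  assumes ab: "(a, b) \<in> undominated P A"
  shows "(a, b) \<in> consecutive_pairs n (chain_map n P A)"
proof -
  have a: "1 \<le> a" "a < b" "b \<le> n" using undominated_forward[OF ab] by auto
  have "b \<in> arc_chain P A a" using ab by (auto simp: arc_chain_iff)
  then have same: "chain_map n P A a = chain_map n P A b" using a chain_map_eq_iff by simp
  have "chain_map n P A c \<noteq> chain_map n P A a" if c: "a < c" "c < b" for c
  proof
    assume "chain_map n P A c = chain_map n P A a"
    moreover have "c \<in> {1..n}" using a c by auto
    ultimately have "c \<in> arc_chain P A a" using chain_map_eq_iff[of a c] a by auto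
    then have "(a, c) \<in> (undominated P A)\<^sup>*"
      using c undominated_rtrancl_forward by (fastforce simp: arc_chain_iff)
    then obtain c' where "(a, c') \<in> undominated P A" "(c', c) \<in> (undominated P A)\<^sup>*"
      using c by (metis converse_rtranclE less_irrefl)
    then show False
      using undominated_right_unique[OF ab] undominated_rtrancl_forward c by fastforce
  qed
  then show ?thesis using a same unfolding consecutive_pairs_def by auto
qed

lemma consecutive_undominated:
  assumes ab: "(a, b) \<in> consecutive_pairs n (chain_map n P A)"
  shows "(a, b) \<in> undominated P A"
proof -
  have a: "1 \<le> a" "a < b" "b \<le> n" "chain_map n P A a = chain_map n P A b"
    using ab unfolding consecutive_pairs_def by auto
  then have "b \<in> arc_chain P A a" using chain_map_eq_iff by simp
  then have "(a, b) \<in> (undominated P A)\<^sup>*"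
    using a undominated_rtrancl_forward by (fastforce simp: arc_chain_iff)
  then obtain c where c: "(a, c) \<in> undominated P A" "(c, b) \<in> (undominated P A)\<^sup>*"
    using a by (metis converse_rtranclE less_irrefl)
  then have "c \<in> arc_chain P A a" by (auto simp: arc_chain_iff)
  moreover have "c \<in> {1..n}" using undominated_forward[OF c(1)] by auto
  ultimately have "chain_map n P A c = chain_map n P A a"
    using a chain_map_eq_iff[of a c] by auto
  moreover have "a < c" "c \<le> b"
    using undominated_forward[OF c(1)] undominated_rtrancl_forward[OF c(2)] by auto
  ultimately have "c = b" using ab unfolding consecutive_pairs_def by fastforce
  then show ?thesis using c by simp
qed

lemma undominated_eq_consecutive_pairs:
  "undominated P A = consecutive_pairs n (chain_map n P A)"
  using undominated_consecutive consecutive_undominated by auto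

lemma incoming_if_chain_map_neq_pos:
  assumes "i \<in> {1..n}" "chain_map n P A i \<noteq> P i"
  shows "\<exists>a. (a, i) \<in> undominated P A"
proof -
  have "chain_head i \<noteq> i" using assms chain_map_eq by auto
  moreover have "(chain_head i, i) \<in> (undominated P A)\<^sup>*"
    using chain_head_reaches arc_chain_self by blast
  ultimately show ?thesis by (metis rtranclE)
qed

lemma Least_eq_if_pos_in_image:
  assumes i: "i \<in> {1..n}" and "P i \<in> chain_map n P A ` {1..n}"
  shows "i = (LEAST k. k \<in> {1..n} \<and> chain_map n P A k = P i)"
proof -
  obtain j where j: "j \<in> {1..n}" "chain_map n P A j = P i" using assms(2) by auto
  then have "chain_head j = i" using i chain_map_eq chain_head_in_range pos_eq_iff by metis
  then have "arc_chain P A i = arc_chain P A j" using arc_chain_eq chain_head_mem[of j] by metis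
  then have head: "chain_head i = i" using \<open>chain_head j = i\<close> unfolding chain_head_def by simp
  then have self: "chain_map n P A i = P i" using i chain_map_eq by simp
  have "i \<le> k" if k: "k \<in> {1..n}" "chain_map n P A k = P i" for k
  proof -
    have "k \<in> arc_chain P A i" using chain_map_eq_iff[OF i k(1)] k self by simp
    then show ?thesis using chain_head_reaches[of k i] head undominated_rtrancl_forward by fastforce
  qed
  then show ?thesis using i self by (intro Least_equality[symmetric]) auto
qed

lemma dominated_by_undominated:
  "(i, l) \<in> A \<Longrightarrow> \<exists>(j, k) \<in> undominated P A. P i \<le> P j \<and> P k \<le> P l"
proof (induction "P l - P i" arbitrary: i l rule: less_induct)
  case less
  show ?case
  proof (cases "(i, l) \<in> undominated P A")
    case False
    then obtain j k where jk: "(j, k) \<in> A" "(j, k) \<noteq> (i, l)" "P i \<le> P j" "P k \<le> P l"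
      using less.prems unfolding undominated_def by blast
    have "P j \<noteq> P i \<or> P k \<noteq> P l"
      using jk arc_forward[OF jk(1)] arc_forward[OF less.prems] pos_eq_iff by fastforce
    then have "P k - P j < P l - P i"
      using jk arc_forward[OF jk(1)] arc_forward[OF less.prems] by arith
    then obtain j' k' where "(j', k') \<in> undominated P A" "P j \<le> P j'" "P k' \<le> P k"
      using less.hyps[OF _ jk(1)] by blast
    then show ?thesis using jk(3,4) by (intro bexI[of _ "(j', k')"]) auto
  qed auto
qed

lemma chain_map_parking_function: "parking_function n (chain_map n P A)"
proof -
  have "j \<le> card {i \<in> {1..n}. chain_map n P A i \<le> j}" if j: "j \<in> {1..n}" for j
  proof -
    have "{i \<in> {1..n}. P i \<le> j} \<subseteq> {i \<in> {1..n}. chain_map n P A i \<le> j}"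
      using chain_map_le_pos by fastforce
    then have "card {i \<in> {1..n}. P i \<le> j} \<le> card {i \<in> {1..n}. chain_map n P A i \<le> j}"
      by (intro card_mono) auto
    then show ?thesis using card_pos_atMost j by simp
  qed
  moreover have "chain_map n P A i = 0" if "i \<notin> {1..n}" for i
    using that unfolding chain_map_def by auto
  ultimately show ?thesis unfolding parking_function_def using chain_map_mem by blast
qed

lemma chain_map_G_parking:
  assumes "\<And>i j. (i, j) \<in> A \<Longrightarrow> {i, j} \<in> G"
  shows "chain_map n P A \<in> G_parking_functions n G"
proof -
  let ?F = "chain_map n P A"
  have "{i, LEAST j. i < j \<and> j \<le> n \<and> ?F i = ?F j} \<in> G"
    if "i \<in> {1..n}" "\<exists>j. i < j \<and> j \<le> n \<and> ?F i = ?F j" for i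
  proof -
    have "(i, LEAST j. i < j \<and> j \<le> n \<and> ?F i = ?F j) \<in> undominated P A"
      using consecutive_pairs_Least[OF that] undominated_eq_consecutive_pairs by simp
    then show ?thesis using assms undominated_subset by blast
  qed
  then show ?thesis using chain_map_parking_function unfolding G_parking_functions_def by blast
qed

lemma arcs_subset_if_same_chain_map:
  assumes S': "arc_system n P B" and F: "chain_map n P B = chain_map n P A"
    and closed: "\<And>i l j k. (i, l) \<in> A \<Longrightarrow> (j, k) \<in> B \<Longrightarrow> P i \<le> P j \<Longrightarrow> P k \<le> P l \<Longrightarrow> (i, l) \<in> B"
  shows "A \<subseteq> B"
proof
  fix p assume p: "p \<in> A"
  obtain i l where il: "p = (i, l)" by fastforce
  obtain j k where jk: "(j, k) \<in> undominated P A" "P i \<le> P j" "P k \<le> P l"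
    using dominated_by_undominated p il by blast
  then have "(j, k) \<in> undominated P B"
    using undominated_eq_consecutive_pairs arc_system.undominated_eq_consecutive_pairs[OF S'] F by simp
  then show "p \<in> B" using closed p il jk undominated_subset by blast
qed

lemma undominated_eq_if_dominating:
  assumes "C \<subseteq> A"
    and dom: "\<And>i l. (i, l) \<in> A \<Longrightarrow> \<exists>(j, k) \<in> C. P i \<le> P j \<and> P k \<le> P l"
    and antichain: "\<And>j k j' k'. (j, k) \<in> C \<Longrightarrow> (j', k') \<in> C \<Longrightarrow> P j \<le> P j' \<Longrightarrow> P k' \<le> P k
      \<Longrightarrow> (j', k') = (j, k)"
  shows "undominated P A = C"
proof
  show "undominated P A \<subseteq> C"
  proof
    fix p assume p: "p \<in> undominated P A"
    obtain i l where il: "p = (i, l)" by fastforce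
    then obtain j k where jk: "(j, k) \<in> C" "P i \<le> P j" "P k \<le> P l"
      using dom p undominated_subset by blast
    then have "(j, k) = (i, l)" using undominatedD[of i l P A j k] p il assms(1) by blast
    then show "p \<in> C" using jk(1) il by simp
  qed
  show "C \<subseteq> undominated P A"
  proof
    fix p assume p: "p \<in> C"
    obtain j k where jk: "p = (j, k)" by fastforce
    have "(j', k') = (j, k)" if j'k': "(j', k') \<in> A" "P j \<le> P j'" "P k' \<le> P k" for j' k'
    proof -
      obtain j'' k'' where "(j'', k'') \<in> C" "P j' \<le> P j''" "P k'' \<le> P k'"
        using dom[OF j'k'(1)] by blast
      then have "(j'', k'') = (j, k)" using antichain p jk j'k' by fastforce
      then have "P j' = P j" "P k' = P k" using j'k' \<open>P j' \<le> P j''\<close> \<open>P k'' \<le> P k'\<close> by auto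
      moreover have "j \<in> {1..n}" "k \<in> {1..n}" "j' \<in> {1..n}" "k' \<in> {1..n}"
        using arc_forward j'k'(1) arc_forward[of j k] p jk assms(1) by fastforce+
      ultimately show ?thesis using pos_eq_iff by simp
    qed
    then show "p \<in> undominated P A" unfolding undominated_def using p jk assms(1) by blast
  qed
qed

end
lemma region_arc_system:
  assumes R: "R \<in> S_regions n G"
  shows "arc_system n (pos (region_word n R)) (region_arcs n G R)"
proof -
  obtain x where x: "x \<in> R" using S_regions_nonempty[OF R] by blast
  note w = region_word_sorted[OF R x]
  have d: "distinct (region_word n R)" using w(2) by (rule sorted_decreasing_distinct)
  then have len: "length (region_word n R) = n" using w(1) distinct_card by fastforce
  show ?thesis
  proof
    fix a assume "a \<in> {1..n}"
    then show "pos (region_word n R) a \<in> {1..n}" using pos_mem[OF d] w(1) len by auto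
  next
    show "inj_on (pos (region_word n R)) {1..n}" using inj_on_pos[OF d] w(1) by simp
  next
    fix i j assume "(i, j) \<in> region_arcs n G R"
    then show "1 \<le> i \<and> i < j \<and> j \<le> n \<and> pos (region_word n R) i < pos (region_word n R) j"
      using region_pos_less_iff[OF R x, of i j] unfolding region_arcs_eq[OF R x] by auto
  qed
qed

lemma sigma_nG_G_parking: "R \<in> S_regions n G \<Longrightarrow> sigma_nG n G R \<in> G_parking_functions n G"
  unfolding sigma_nG_eq_chain_map
  by (rule arc_system.chain_map_G_parking[OF region_arc_system]) (auto simp: region_arcs_def)

section \<open>Injectivity\<close>

lemma pos_eq_if_agree_below:
  assumes S: "arc_system n P A" and S': "arc_system n P' A'"
    and F: "chain_map n P A = chain_map n P' A'"
    and i: "i \<in> {1..n}" "P i = q" and i': "i' \<in> {1..n}" "P' i' = q"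
    and below: "\<And>j. j \<in> {1..n} \<Longrightarrow> P j < q \<Longrightarrow> P' j = P j"
    and below': "\<And>j. j \<in> {1..n} \<Longrightarrow> P' j < q \<Longrightarrow> P j < q"
  shows "i = i'"
proof (cases "q \<in> chain_map n P A ` {1..n}")
  case True
  then show ?thesis
    using arc_system.Least_eq_if_pos_in_image[OF S i(1)] arc_system.Least_eq_if_pos_in_image[OF S' i'(1)]
      F i i' by simp
next
  case False
  have "chain_map n P A i \<noteq> P i" "chain_map n P' A' i' \<noteq> P' i'"
    using False i i' F by force+
  then obtain a a' where a: "(a, i) \<in> undominated P A" and a': "(a', i') \<in> undominated P' A'"
    using arc_system.incoming_if_chain_map_neq_pos[OF S i(1)]
      arc_system.incoming_if_chain_map_neq_pos[OF S' i'(1)] by blast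
  have U: "undominated P' A' = undominated P A"
    using arc_system.undominated_eq_consecutive_pairs[OF S]
      arc_system.undominated_eq_consecutive_pairs[OF S'] F by simp
  have a_below: "P a < q" "a \<in> {1..n}" and a'_below: "P' a' < q" "a' \<in> {1..n}"
    using arc_system.undominated_forward[OF S a] arc_system.undominated_forward[OF S' a'] i i' by auto
  show ?thesis
  proof (rule ccontr)
    assume "i \<noteq> i'"
    then have "P i' \<noteq> q" "P' i \<noteq> q"
      using arc_system.pos_eq_iff[OF S i'(1) i(1)] arc_system.pos_eq_iff[OF S' i(1) i'(1)] i(2) i'(2)
      by simp_all
    then have "P i < P i'" "P' i' < P' i"
      using below[OF i'(1)] below'[OF i(1)] i i' by fastforce+
    then have "P a < P a'" "P' a' < P' a"
      using undominated_nonnesting[of a i P A a' i'] undominated_nonnesting[of a' i' P' A' a i] a a' U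
      by auto
    moreover have "P' a = P a" "P' a' = P a'"
      using below[OF a_below(2,1)] below[OF a'_below(2) below'[OF a'_below(2,1)]] by simp_all
    ultimately show False by simp
  qed
qed

lemma chain_map_determines_pos:
  assumes S: "arc_system n P A" and S': "arc_system n P' A'"
    and F: "chain_map n P A = chain_map n P' A'"
  shows "\<forall>i\<in>{1..n}. P' i = P i"
proof -
  have "\<forall>j\<in>{1..n}. P j < q \<longrightarrow> P' j = P j" for q
  proof (induction q)
    case (Suc q)
    have below': "P j < q" if j: "j \<in> {1..n}" "P' j < q" for j
    proof -
      have "P' j \<in> P ` {1..n}" using arc_system.pos_image[OF S] arc_system.pos_mem[OF S' j(1)] by simp
      then obtain k where k: "k \<in> {1..n}" "P k = P' j" by auto
      then have "P' k = P' j" using Suc.IH j by simp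
      then show ?thesis using arc_system.pos_eq_iff[OF S'] j k by simp
    qed
    have "P' i = P i" if i: "i \<in> {1..n}" "P i = q" for i
    proof -
      have "q \<in> P' ` {1..n}" using arc_system.pos_image[OF S'] arc_system.pos_mem[OF S i(1)] i(2) by simp
      then obtain i' where i': "i' \<in> {1..n}" "P' i' = q" by auto
      then have "i = i'" using pos_eq_if_agree_below[OF S S' F i i'] Suc.IH below' by blast
      then show ?thesis using i i' by simp
    qed
    then show ?case using Suc.IH less_Suc_eq by auto
  qed simp
  then have "\<forall>j\<in>{1..n}. P j < Suc n \<longrightarrow> P' j = P j" .
  then show ?thesis using arc_system.pos_mem[OF S] by fastforce
qed

lemma region_word_eq_if_same_sigma:
  assumes R1: "R1 \<in> S_regions n G" and R2: "R2 \<in> S_regions n G"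
    and eq: "sigma_nG n G R1 = sigma_nG n G R2"
  shows "region_word n R1 = region_word n R2"
proof -
  obtain x y where x: "x \<in> R1" and y: "y \<in> R2" using S_regions_nonempty R1 R2 by blast
  have "set (region_word n R1) = {1..n}" "set (region_word n R2) = {1..n}"
    "distinct (region_word n R1)" "distinct (region_word n R2)"
    using region_word_sorted[OF R1 x] region_word_sorted[OF R2 y] sorted_decreasing_distinct by blast+
  moreover have "\<forall>i\<in>{1..n}. pos (region_word n R2) i = pos (region_word n R1) i"
    using chain_map_determines_pos[OF region_arc_system[OF R1] region_arc_system[OF R2]] eq
    unfolding sigma_nG_eq_chain_map by blast
  ultimately show ?thesis using list_eq_if_pos_eq by metis
qed

lemma region_arcs_subset_if_same_sigma:
  assumes R1: "R1 \<in> S_regions n G" and R2: "R2 \<in> S_regions n G"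
    and eq: "sigma_nG n G R1 = sigma_nG n G R2"
  shows "region_arcs n G R1 \<subseteq> region_arcs n G R2"
proof -
  obtain y where y: "y \<in> R2" using S_regions_nonempty R2 by blast
  have w: "region_word n R2 = region_word n R1" using region_word_eq_if_same_sigma[OF R1 R2 eq] by simp
  let ?P = "pos (region_word n R1)"
  have "arc_system n ?P (region_arcs n G R2)" using region_arc_system[OF R2] w by simp
  moreover have "chain_map n ?P (region_arcs n G R2) = chain_map n ?P (region_arcs n G R1)"
    using eq w unfolding sigma_nG_eq_chain_map by simp
  moreover have "(i, l) \<in> region_arcs n G R2"
    if il: "(i, l) \<in> region_arcs n G R1" and jk: "(j, k) \<in> region_arcs n G R2"
      and le: "?P i \<le> ?P j" "?P k \<le> ?P l" for i l j k
  proof -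
    have il': "1 \<le> i" "i < l" "l \<le> n" "{i, l} \<in> G" using il unfolding region_arcs_def by auto
    have jk': "1 \<le> j" "j < k" "k \<le> n" "1 < y j - y k" using jk unfolding region_arcs_eq[OF R2 y] by auto
    have "y j \<le> y i" "y l \<le> y k"
      using il' jk' le region_pos_le_imp[OF R2 y] w by auto
    then show ?thesis using il' jk' unfolding region_arcs_eq[OF R2 y] by auto
  qed
  ultimately show ?thesis by (rule arc_system.arcs_subset_if_same_chain_map[OF region_arc_system[OF R1]])
qed

lemma sigma_nG_inj_on: "inj_on (sigma_nG n G) (S_regions n G)"
proof (rule inj_onI)
  fix R1 R2 assume R1: "R1 \<in> S_regions n G" and R2: "R2 \<in> S_regions n G"
    and eq: "sigma_nG n G R1 = sigma_nG n G R2"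
  obtain x y where x: "x \<in> R1" and y: "y \<in> R2" using S_regions_nonempty R1 R2 by blast
  have arcs: "region_arcs n G R1 = region_arcs n G R2"
    using region_arcs_subset_if_same_sigma[OF R1 R2 eq] region_arcs_subset_if_same_sigma[OF R2 R1 eq[symmetric]]
    by (rule subset_antisym)
  have w: "region_word n R1 = region_word n R2" using region_word_eq_if_same_sigma[OF R1 R2 eq] .
  have "x i < x j \<longleftrightarrow> y i < y j" if "i \<in> {1..n}" "j \<in> {1..n}" for i j
    using region_pos_less_iff[OF R1 x that(2,1)] region_pos_less_iff[OF R2 y that(2,1)] w by simp
  moreover have "1 < x i - x j \<longleftrightarrow> 1 < y i - y j"
    if "1 \<le> i" "i < j" "j \<le> n" "{i, j} \<in> G" for i j
  proof -
    have "(i, j) \<in> region_arcs n G R1 \<longleftrightarrow> (i, j) \<in> region_arcs n G R2" using arcs by simp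
    then show ?thesis unfolding region_arcs_eq[OF R1 x] region_arcs_eq[OF R2 y] using that by simp
  qed
  ultimately have "same_pattern n G x y" unfolding same_pattern_def by blast
  then have "y \<in> connected_component_set (S_complement n G) x"
    using connected_component_if_same_pattern S_regions_memberD R1 R2 x y by blast
  then have "connected_component_set (S_complement n G) y = connected_component_set (S_complement n G) x"
    by (rule connected_component_eq)
  then show "R1 = R2" using S_regions_memberD(2)[OF R1 x] S_regions_memberD(2)[OF R2 y] by simp
qed

section \<open>Surjectivity: the greedy placement\<close>

lemma finite_strict_separation:
  fixes L H :: "real set"
  assumes "finite L" "finite H" "\<forall>l\<in>L. \<forall>h\<in>H. l < h"
  shows "\<exists>v. (\<forall>l\<in>L. l < v) \<and> (\<forall>h\<in>H. v < h)"
proof -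
  consider "H = {}" | "L = {}" "H \<noteq> {}" | "L \<noteq> {}" "H \<noteq> {}" by blast
  then show ?thesis
  proof cases
    case 1
    show ?thesis using 1 Max_ge[OF assms(1)] by (intro exI[of _ "Max L + 1"]) fastforce
  next
    case 2
    show ?thesis using 2 Min_le[OF assms(2)] by (intro exI[of _ "Min H - 1"]) fastforce
  next
    case 3
    have "Max L < Min H" using 3 assms Max_in Min_in by blast
    then show ?thesis using Max_ge[OF assms(1)] Min_le[OF assms(2)]
      by (intro exI[of _ "(Max L + Min H) / 2"]) fastforce
  qed
qed

lemma staircase_realization:
  fixes U :: "nat \<Rightarrow> nat \<Rightarrow> bool"
  assumes mono: "\<And>u v u' v'. U u v \<Longrightarrow> u' \<le> u \<Longrightarrow> v \<le> v' \<Longrightarrow> U u' v'"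
  shows "\<exists>t :: nat \<Rightarrow> real. \<forall>u v. 1 \<le> u \<longrightarrow> u < v \<longrightarrow> v \<le> m \<longrightarrow>
           t u < t v \<and> (U u v \<longrightarrow> 1 < t v - t u) \<and> (\<not> U u v \<longrightarrow> t v - t u < 1)"
proof (induction m)
  case (Suc m)
  then obtain t :: "nat \<Rightarrow> real" where t: "\<And>u v. 1 \<le> u \<Longrightarrow> u < v \<Longrightarrow> v \<le> m \<Longrightarrow>
      t u < t v \<and> (U u v \<longrightarrow> 1 < t v - t u) \<and> (\<not> U u v \<longrightarrow> t v - t u < 1)"
    by blast
  have t_le: "t u \<le> t w" if "1 \<le> u" "u \<le> w" "w \<le> m" for u w
    using t[of u w] that by (cases "u = w") auto
  let ?L = "t ` {1..m} \<union> (\<lambda>u. t u + 1) ` {u \<in> {1..m}. U u (Suc m)}"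
  let ?H = "(\<lambda>w. t w + 1) ` {w \<in> {1..m}. \<not> U w (Suc m)}"
  have "t u < t w + 1" if "u \<in> {1..m}" "w \<in> {1..m}" "\<not> U w (Suc m)" for u w
  proof (cases "u \<le> w")
    case True
    then show ?thesis using t_le[of u w] that by auto
  next
    case False
    then have "\<not> U w u" using mono[of w u w "Suc m"] that by auto
    then show ?thesis using t[of w u] that False by auto
  qed
  moreover have "t u < t w" if "u \<in> {1..m}" "w \<in> {1..m}" "U u (Suc m)" "\<not> U w (Suc m)" for u w
    using that t[of u w] mono[of u "Suc m" w "Suc m"] by (cases "u < w") auto
  ultimately have sep: "\<forall>l\<in>?L. \<forall>h\<in>?H. l < h" by auto
  have fin: "finite ?L" "finite ?H" by simp_all
  obtain v where v: "\<forall>l\<in>?L. l < v" "\<forall>h\<in>?H. v < h"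
    using finite_strict_separation[OF fin sep] by blast
  show ?case
  proof (intro exI allI impI)
    fix u w assume u: "1 \<le> u" "u < w" "w \<le> Suc m"
    show "(t(Suc m := v)) u < (t(Suc m := v)) w
      \<and> (U u w \<longrightarrow> 1 < (t(Suc m := v)) w - (t(Suc m := v)) u)
      \<and> (\<not> U u w \<longrightarrow> (t(Suc m := v)) w - (t(Suc m := v)) u < 1)"
    proof (cases "w = Suc m")
      case True
      then have u_mem: "u \<in> {1..m}" using u by auto
      have "t u < v" "U u (Suc m) \<Longrightarrow> t u + 1 < v" "\<not> U u (Suc m) \<Longrightarrow> v < t u + 1"
        using v u_mem by blast+
      then show ?thesis using True u by auto
    qed (use u t[of u w] in auto)
  qed
qed simp

locale parking =
  fixes n :: nat and f :: "nat \<Rightarrow> nat"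
  assumes parking_function: "parking_function n f"
begin

abbreviation V :: "nat set" where "V \<equiv> f ` {1..n}"

abbreviation C :: "(nat \<times> nat) set" where "C \<equiv> consecutive_pairs n f"

lemma value_mem: "i \<in> {1..n} \<Longrightarrow> f i \<in> {1..n}"
  using parking_function unfolding parking_function_def by blast

lemma value_outside: "i \<notin> {1..n} \<Longrightarrow> f i = 0"
  using parking_function unfolding parking_function_def by blast

lemma parking_card: "j \<in> {1..n} \<Longrightarrow> j \<le> card {i \<in> {1..n}. f i \<le> j}"
  using parking_function unfolding parking_function_def by blast

definition level_min :: "nat \<Rightarrow> nat" where
  "level_min v = (LEAST j. j \<in> {1..n} \<and> f j = v)"

lemma level_min:
  assumes "v \<in> V"
  shows "level_min v \<in> {1..n}" "f (level_min v) = v"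
    and "j \<in> {1..n} \<Longrightarrow> f j = v \<Longrightarrow> level_min v \<le> j"
  using assms LeastI[of "\<lambda>j. j \<in> {1..n} \<and> f j = v"] Least_le[of "\<lambda>j. j \<in> {1..n} \<and> f j = v"]
  unfolding level_min_def by blast+

lemma level_min_no_pred: "v \<in> V \<Longrightarrow> (a, level_min v) \<notin> C"
  using level_min[of v] unfolding consecutive_pairs_def by fastforce

text \<open>\<open>e u\<close> is the element placed at position \<open>u\<close>. The last clause says that successors are
  placed in the order in which their predecessors were placed.\<close>

definition greedy_prefix :: "nat \<Rightarrow> (nat \<Rightarrow> nat) \<Rightarrow> bool" where
  "greedy_prefix q e \<longleftrightarrow> e ` {1..q} \<subseteq> {1..n} \<and> inj_on e {1..q}
     \<and> (\<forall>u\<in>{1..q}. f (e u) \<le> u)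
     \<and> (\<forall>u\<in>{1..q}. u \<in> V \<longrightarrow> e u = level_min u)
     \<and> (\<forall>u\<in>{1..q}. u \<notin> V \<longrightarrow> (\<exists>v\<in>{1..<u}. (e v, e u) \<in> C))
     \<and> (\<forall>u\<in>{1..q}. \<forall>v\<in>{1..q}. \<forall>v'\<in>{1..<v}. \<forall>b.
          (e v, e u) \<in> C \<and> (e v', b) \<in> C \<longrightarrow> b \<in> e ` {1..<u})"

lemma
  assumes "greedy_prefix q e"
  shows greedy_prefix_mem: "u \<in> {1..q} \<Longrightarrow> e u \<in> {1..n}"
    and greedy_prefix_inj: "inj_on e {1..q}"
    and greedy_prefix_value_le: "u \<in> {1..q} \<Longrightarrow> f (e u) \<le> u"
    and greedy_prefix_level_min: "u \<in> {1..q} \<Longrightarrow> u \<in> V \<Longrightarrow> e u = level_min u"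
    and greedy_prefix_pred: "u \<in> {1..q} \<Longrightarrow> u \<notin> V \<Longrightarrow> \<exists>v\<in>{1..<u}. (e v, e u) \<in> C"
    and greedy_prefix_fifo: "u \<in> {1..q} \<Longrightarrow> v \<in> {1..q} \<Longrightarrow> v' \<in> {1..<v} \<Longrightarrow> (e v, e u) \<in> C
      \<Longrightarrow> (e v', b) \<in> C \<Longrightarrow> b \<in> e ` {1..<u}"
  using assms unfolding greedy_prefix_def by blast+

context
  fixes q :: nat and e :: "nat \<Rightarrow> nat" and b :: nat
  assumes e: "greedy_prefix q e"
    and fifo: "\<And>v v' b'. v \<in> {1..q} \<Longrightarrow> v' \<in> {1..<v} \<Longrightarrow> (e v, b) \<in> C \<Longrightarrow> (e v', b') \<in> C
      \<Longrightarrow> b' \<in> e ` {1..q}"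
    and no_succ: "\<And>u. u \<in> {1..q} \<Longrightarrow> (b, e u) \<notin> C"
begin

lemma greedy_prefix_extend_fifo:
  assumes uv: "u \<in> {1..Suc q}" "v \<in> {1..Suc q}" "v' \<in> {1..<v}"
    and arcs: "((e(Suc q := b)) v, (e(Suc q := b)) u) \<in> C" "((e(Suc q := b)) v', b') \<in> C"
  shows "b' \<in> (e(Suc q := b)) ` {1..<u}"
proof -
  have img: "(e(Suc q := b)) ` {1..<u} = e ` {1..<u}" using uv(1) by auto
  have irrefl: "(c, c) \<notin> C" for c unfolding consecutive_pairs_def by simp
  show ?thesis
  proof (cases "u = Suc q")
    case True
    then have "v \<in> {1..q}" using uv arcs irrefl by (auto split: if_splits)
    then have "b' \<in> e ` {1..q}" using uv arcs True fifo[of v v' b'] by auto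
    then show ?thesis using True img by (simp add: atLeastLessThanSuc_atLeastAtMost)
  next
    case False
    then have "u \<in> {1..q}" "v \<in> {1..q}" using uv arcs no_succ by (auto split: if_splits)
    then have "b' \<in> e ` {1..<u}" using uv arcs greedy_prefix_fifo[OF e, of u v v' b'] by auto
    then show ?thesis using img by simp
  qed
qed

lemma greedy_prefix_extend:
  assumes b: "b \<in> {1..n}" "b \<notin> e ` {1..q}" "f b \<le> Suc q"
    and at_value: "Suc q \<in> V \<Longrightarrow> b = level_min (Suc q)"
    and pred: "Suc q \<notin> V \<Longrightarrow> \<exists>v\<in>{1..q}. (e v, b) \<in> C"
  shows "greedy_prefix (Suc q) (e(Suc q := b))"
proof -
  let ?e = "e(Suc q := b)"
  have split: "{1..Suc q} = insert (Suc q) {1..q}" by auto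
  have "inj_on ?e {1..Suc q}"
  proof -
    have "inj_on ?e {1..q} \<longleftrightarrow> inj_on e {1..q}" by (rule inj_on_cong) simp
    moreover have "?e (Suc q) \<notin> ?e ` ({1..q} - {Suc q})" using b(2) by auto
    ultimately show ?thesis using greedy_prefix_inj[OF e] unfolding split by simp
  qed
  moreover have "\<forall>u\<in>{1..Suc q}. u \<notin> V \<longrightarrow> (\<exists>v\<in>{1..<u}. (?e v, ?e u) \<in> C)"
  proof (intro ballI impI)
    fix u assume u: "u \<in> {1..Suc q}" "u \<notin> V"
    show "\<exists>v\<in>{1..<u}. (?e v, ?e u) \<in> C"
    proof (cases "u = Suc q")
      case True
      then show ?thesis using pred u by fastforce
    next
      case False
      then have "u \<in> {1..q}" using u by auto
      then show ?thesis using greedy_prefix_pred[OF e _ u(2)] by fastforce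
    qed
  qed
  moreover have "?e ` {1..Suc q} \<subseteq> {1..n}" using b(1) greedy_prefix_mem[OF e] unfolding split by auto
  moreover have "\<forall>u\<in>{1..Suc q}. f (?e u) \<le> u"
    using b(3) greedy_prefix_value_le[OF e] unfolding split by auto
  moreover have "\<forall>u\<in>{1..Suc q}. u \<in> V \<longrightarrow> ?e u = level_min u"
    using at_value greedy_prefix_level_min[OF e] unfolding split by auto
  moreover have "\<forall>u\<in>{1..Suc q}. \<forall>v\<in>{1..Suc q}. \<forall>v'\<in>{1..<v}. \<forall>b'.
      (?e v, ?e u) \<in> C \<and> (?e v', b') \<in> C \<longrightarrow> b' \<in> ?e ` {1..<u}"
    using greedy_prefix_extend_fifo by blast
  ultimately show ?thesis unfolding greedy_prefix_def by blast
qed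

end

lemma greedy_prefix_0: "greedy_prefix 0 e"
  unfolding greedy_prefix_def by auto

lemma pending_successor_exists:
  assumes e: "greedy_prefix q e" and q: "Suc q \<le> n" "Suc q \<notin> V"
  shows "\<exists>v\<in>{1..q}. \<exists>b. (e v, b) \<in> C \<and> b \<notin> e ` {1..q}"
proof -
  let ?S = "e ` {1..q}" and ?T = "{i \<in> {1..n}. f i \<le> q}"
  have "{i \<in> {1..n}. f i \<le> Suc q} = ?T" using q(2) by (force simp: le_Suc_eq)
  then have T: "q < card ?T" using parking_card[of "Suc q"] q(1) by simp
  have S: "card ?S = q" using card_image[OF greedy_prefix_inj[OF e]] by simp
  have "\<not> ?T \<subseteq> ?S"
  proof
    assume "?T \<subseteq> ?S"
    then have "card ?T \<le> card ?S" by (intro card_mono) auto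
    then show False using T S by simp
  qed
  then obtain i where i: "i \<in> {1..n}" "f i \<le> q" "i \<notin> ?S" by blast
  have fi: "f i \<in> {1..q}" "f i \<in> V" using value_mem[OF i(1)] i(1,2) by auto
  then have "e (f i) = level_min (f i)" using greedy_prefix_level_min[OF e] by blast
  then have start: "level_min (f i) \<in> ?S" using fi(1) by force
  have "(level_min (f i), i) \<in> C\<^sup>*"
    using consecutive_pairs_connect[of "level_min (f i)" i n f] level_min[OF fi(2)] i(1) by auto
  from rtrancl_exit[OF this start i(3)]
  obtain c b where cb: "(c, b) \<in> C" "c \<in> ?S" "b \<notin> ?S" by blast
  then obtain v where "v \<in> {1..q}" "c = e v" by blast
  then show ?thesis using cb by blast
qed

lemma greedy_prefix_extend_value:
  assumes e: "greedy_prefix q e" and q: "Suc q \<in> V"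
  shows "greedy_prefix (Suc q) (e(Suc q := level_min (Suc q)))"
proof (rule greedy_prefix_extend[OF e])
  note h = level_min[OF q]
  show "level_min (Suc q) \<in> {1..n}" "f (level_min (Suc q)) \<le> Suc q" using h by simp_all
  show "level_min (Suc q) \<notin> e ` {1..q}"
    using greedy_prefix_value_le[OF e] h(2) by fastforce
  show "level_min (Suc q) = level_min (Suc q)" ..
  show "\<exists>v\<in>{1..q}. (e v, level_min (Suc q)) \<in> C" if "Suc q \<notin> V" using that q by simp
  show "b' \<in> e ` {1..q}"
    if "v \<in> {1..q}" "v' \<in> {1..<v}" "(e v, level_min (Suc q)) \<in> C" "(e v', b') \<in> C" for v v' b'
    using level_min_no_pred[OF q] that by simp
  show "(level_min (Suc q), e u) \<notin> C" if "u \<in> {1..q}" for u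
  proof
    assume "(level_min (Suc q), e u) \<in> C"
    then have "f (e u) = Suc q" using h(2) unfolding consecutive_pairs_def by simp
    then show False using greedy_prefix_value_le[OF e that] that by simp
  qed
qed

lemma greedy_prefix_extend_pending:
  assumes e: "greedy_prefix q e" and q: "Suc q \<le> n" "Suc q \<notin> V"
  shows "\<exists>e'. greedy_prefix (Suc q) e'"
proof -
  let ?pending = "\<lambda>v. v \<in> {1..q} \<and> (\<exists>b. (e v, b) \<in> C \<and> b \<notin> e ` {1..q})"
  define v where "v = (LEAST v. ?pending v)"
  have "\<exists>v. ?pending v" using pending_successor_exists[OF e q] by blast
  then have "?pending v" unfolding v_def by (rule LeastI_ex)
  then obtain b where v: "v \<in> {1..q}" and b: "(e v, b) \<in> C" "b \<notin> e ` {1..q}" by blast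
  have earlier: "b' \<in> e ` {1..q}" if v': "v' \<in> {1..<v}" "(e v', b') \<in> C" for v' b'
  proof (rule ccontr)
    assume "b' \<notin> e ` {1..q}"
    then have "?pending v'" using v' v by auto
    then show False using not_less_Least[of v' ?pending] v'(1) unfolding v_def by auto
  qed
  have "greedy_prefix (Suc q) (e(Suc q := b))"
  proof (rule greedy_prefix_extend[OF e])
    show "b \<in> {1..n}" using b(1) unfolding consecutive_pairs_def by auto
    show "b \<notin> e ` {1..q}" by (rule b(2))
    show "f b \<le> Suc q"
      using b(1) greedy_prefix_value_le[OF e v] v unfolding consecutive_pairs_def by auto
    show "b = level_min (Suc q)" if "Suc q \<in> V" using that q(2) by blast
    show "\<exists>v\<in>{1..q}. (e v, b) \<in> C" if "Suc q \<notin> V" using v b by blast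
    show "b' \<in> e ` {1..q}"
      if w: "w \<in> {1..q}" "w' \<in> {1..<w}" "(e w, b) \<in> C" "(e w', b') \<in> C" for w w' b'
    proof -
      have "e w = e v" using consecutive_pairs_left_unique w(3) b(1) by blast
      then have "w = v" using inj_onD[OF greedy_prefix_inj[OF e]] w(1) v by blast
      then show ?thesis using earlier w by blast
    qed
    show "(b, e u) \<notin> C" if u: "u \<in> {1..q}" for u
    proof
      assume bu: "(b, e u) \<in> C"
      then have "u \<notin> V" using greedy_prefix_level_min[OF e u] level_min_no_pred by fastforce
      then obtain w where w: "w \<in> {1..<u}" "(e w, e u) \<in> C" using greedy_prefix_pred[OF e u] by blast
      then have "e w = b" using consecutive_pairs_left_unique bu by blast
      then show False using b(2) w(1) u by force
    qed
  qed
  then show ?thesis by blast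
qed

lemma greedy_prefix_exists: "q \<le> n \<Longrightarrow> \<exists>e. greedy_prefix q e"
proof (induction q)
  case 0
  then show ?case using greedy_prefix_0 by blast
next
  case (Suc q)
  then obtain e where e: "greedy_prefix q e" by auto
  show ?case
  proof (cases "Suc q \<in> V")
    case True
    then show ?thesis using greedy_prefix_extend_value[OF e] by blast
  next
    case False
    then show ?thesis using greedy_prefix_extend_pending[OF e Suc.prems] by blast
  qed
qed

definition greedy_placement :: "nat \<Rightarrow> nat" where
  "greedy_placement = (SOME e. greedy_prefix n e)"

definition greedy_word :: "nat list" where
  "greedy_word = map greedy_placement [1..<Suc n]"

abbreviation greedy_pos :: "nat \<Rightarrow> nat" where
  "greedy_pos \<equiv> pos greedy_word"

lemma greedy_placement: "greedy_prefix n greedy_placement"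
  unfolding greedy_placement_def using greedy_prefix_exists[of n] by (simp add: someI_ex)

lemma greedy_placement_image: "greedy_placement ` {1..n} = {1..n}"
  using greedy_prefix_mem[OF greedy_placement] greedy_prefix_inj[OF greedy_placement]
  by (intro endo_inj_surj) auto

lemma distinct_greedy_word: "distinct greedy_word"
  unfolding greedy_word_def using greedy_prefix_inj[OF greedy_placement]
  by (simp add: distinct_map atLeastLessThanSuc_atLeastAtMost del: upt_Suc)

lemma set_greedy_word: "set greedy_word = {1..n}"
  unfolding greedy_word_def using greedy_placement_image
  by (simp add: atLeastLessThanSuc_atLeastAtMost del: upt_Suc)

lemma greedy_pos_placement:
  assumes u: "u \<in> {1..n}"
  shows "greedy_pos (greedy_placement u) = u"
proof -
  have "greedy_word ! (u - 1) = greedy_placement u" "u - 1 < length greedy_word"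
    using u unfolding greedy_word_def by (auto simp del: upt_Suc)
  then show ?thesis using pos_nth[OF distinct_greedy_word, of "u - 1"] u by simp
qed

lemma
  assumes "a \<in> {1..n}"
  shows greedy_placement_pos: "greedy_placement (greedy_pos a) = a"
    and greedy_pos_mem: "greedy_pos a \<in> {1..n}"
proof -
  obtain u where "u \<in> {1..n}" "a = greedy_placement u" using greedy_placement_image assms by blast
  then show "greedy_placement (greedy_pos a) = a" "greedy_pos a \<in> {1..n}"
    using greedy_pos_placement by simp_all
qed

lemma greedy_pos_level_min: "v \<in> V \<Longrightarrow> greedy_pos (level_min v) = v"
  using greedy_prefix_level_min[OF greedy_placement] greedy_pos_placement value_mem by force

lemma value_le_greedy_pos:
  assumes "a \<in> {1..n}"
  shows "f a \<le> greedy_pos a"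
proof -
  have "f (greedy_placement (greedy_pos a)) \<le> greedy_pos a"
    using greedy_prefix_value_le[OF greedy_placement] greedy_pos_mem[OF assms] by blast
  then show ?thesis using greedy_placement_pos[OF assms] by simp
qed

lemma greedy_pos_consecutive:
  assumes ab: "(a, b) \<in> C"
  shows "greedy_pos a < greedy_pos b"
proof -
  let ?e = greedy_placement and ?u = "greedy_pos b"
  have ab_mem: "a \<in> {1..n}" "b \<in> {1..n}" using ab unfolding consecutive_pairs_def by auto
  then have u: "?u \<in> {1..n}" "?e ?u = b" using greedy_pos_mem greedy_placement_pos by auto
  then have "?u \<notin> V" using greedy_prefix_level_min[OF greedy_placement] level_min_no_pred ab by fastforce
  then obtain w where w: "w \<in> {1..<?u}" "(?e w, b) \<in> C"
    using greedy_prefix_pred[OF greedy_placement u(1)] u(2) by auto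
  then have "?e w = a" using consecutive_pairs_left_unique ab by blast
  moreover have "w \<in> {1..n}" using w(1) u(1) by auto
  ultimately have "greedy_pos a = w" using greedy_pos_placement by blast
  then show ?thesis using w(1) by simp
qed

lemma greedy_pos_nonnesting:
  assumes ab: "(a, b) \<in> C" and ab': "(a', b') \<in> C" and lt: "greedy_pos b < greedy_pos b'"
  shows "greedy_pos a < greedy_pos a'"
proof (rule ccontr)
  let ?e = greedy_placement
  assume not_lt: "\<not> greedy_pos a < greedy_pos a'"
  have mem: "a \<in> {1..n}" "b \<in> {1..n}" "a' \<in> {1..n}" "b' \<in> {1..n}"
    using ab ab' unfolding consecutive_pairs_def by auto
  have "a \<noteq> a'"
  proof
    assume "a = a'"
    then have "b = b'" using consecutive_pairs_right_unique ab ab' by blast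
    then show False using lt by simp
  qed
  then have "greedy_pos a \<noteq> greedy_pos a'"
    using inj_onD[OF inj_on_pos[OF distinct_greedy_word], of a a'] set_greedy_word mem by auto
  then have lt': "greedy_pos a' < greedy_pos a" using not_lt by simp
  have "b' \<in> ?e ` {1..<greedy_pos b}"
  proof (rule greedy_prefix_fifo[OF greedy_placement])
    show "greedy_pos b \<in> {1..n}" "greedy_pos a \<in> {1..n}" using greedy_pos_mem mem by auto
    show "greedy_pos a' \<in> {1..<greedy_pos a}" using lt' greedy_pos_mem[OF mem(3)] by auto
    show "(?e (greedy_pos a), ?e (greedy_pos b)) \<in> C" using ab greedy_placement_pos mem by simp
    show "(?e (greedy_pos a'), b') \<in> C" using ab' greedy_placement_pos mem by simp
  qed
  then obtain w where w: "w \<in> {1..<greedy_pos b}" "b' = ?e w" by blast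
  moreover have "w \<in> {1..n}" using w(1) greedy_pos_mem[OF mem(2)] by auto
  ultimately have "greedy_pos b' = w" using greedy_pos_placement by blast
  then show False using lt w(1) by simp
qed

lemma greedy_pos_antichain:
  assumes jk: "(j, k) \<in> C" "(j', k') \<in> C"
    and le: "greedy_pos j \<le> greedy_pos j'" "greedy_pos k' \<le> greedy_pos k"
  shows "(j', k') = (j, k)"
proof -
  have "\<not> greedy_pos k' < greedy_pos k" using greedy_pos_nonnesting[OF jk(2,1)] le(1) by linarith
  then have "greedy_pos k' = greedy_pos k" using le(2) by simp
  moreover have "k \<in> set greedy_word" "k' \<in> set greedy_word"
    using jk set_greedy_word unfolding consecutive_pairs_def by auto
  ultimately have "k' = k" using inj_onD[OF inj_on_pos[OF distinct_greedy_word]] by blast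
  then show ?thesis using consecutive_pairs_left_unique jk by blast
qed

lemma chain_map_eq_if_undominated_eq:
  assumes S: "arc_system n P A" and U: "undominated P A = C"
    and level: "\<And>v. v \<in> V \<Longrightarrow> P (level_min v) = v" and ge: "\<And>a. a \<in> {1..n} \<Longrightarrow> f a \<le> P a"
  shows "chain_map n P A = f"
proof
  fix i
  show "chain_map n P A i = f i"
  proof (cases "i \<in> {1..n}")
    case True
    let ?h = "arc_system.chain_head P A i"
    have chain: "arc_chain P A i = {k \<in> {1..n}. f k = f i}"
      using consecutive_pairs_chain_iff[OF True] U unfolding arc_chain_def by auto
    have fi: "f i \<in> V" using True by blast
    have h: "?h \<in> {1..n}" "f ?h = f i" using arc_system.chain_head_mem[OF S, of i] chain by auto
    have "P ?h \<le> P (level_min (f i))"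
      using arc_system.chain_head_min[OF S] chain level_min[OF fi] by auto
    then have "P ?h = f i" using level[OF fi] ge[OF h(1)] h(2) by simp
    then show ?thesis using arc_system.chain_map_eq[OF S True] by simp
  next
    case False
    then show ?thesis using value_outside unfolding chain_map_def by auto
  qed
qed

definition contains_span :: "nat \<Rightarrow> nat \<Rightarrow> bool" where
  "contains_span u v \<longleftrightarrow> (\<exists>(a, b) \<in> C. u \<le> greedy_pos a \<and> greedy_pos b \<le> v)"

lemma contains_span_mono: "contains_span u v \<Longrightarrow> u' \<le> u \<Longrightarrow> v \<le> v' \<Longrightarrow> contains_span u' v'"
  unfolding contains_span_def by (auto intro: order_trans)

end

locale greedy_heights = parking +
  fixes t :: "nat \<Rightarrow> real"
  assumes heights: "\<And>u v. 1 \<le> u \<Longrightarrow> u < v \<Longrightarrow> v \<le> n \<Longrightarrow>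
    t u < t v \<and> (contains_span u v \<longrightarrow> 1 < t v - t u) \<and> (\<not> contains_span u v \<longrightarrow> t v - t u < 1)"
begin

definition point :: "nat \<Rightarrow> real" where
  "point i = (if i \<in> {1..n} then - t (greedy_pos i) else 0)"

lemma point_diff:
  assumes "a \<in> {1..n}" "b \<in> {1..n}" "greedy_pos a < greedy_pos b"
  shows "point b < point a" "1 < point a - point b \<longleftrightarrow> contains_span (greedy_pos a) (greedy_pos b)"
    "point a - point b \<noteq> 1"
proof -
  have "point a - point b = t (greedy_pos b) - t (greedy_pos a)" using assms(1,2) by (simp add: point_def)
  moreover have "1 \<le> greedy_pos a" "greedy_pos b \<le> n" using greedy_pos_mem assms(1,2) by auto
  ultimately show "point b < point a" "1 < point a - point b \<longleftrightarrow> contains_span (greedy_pos a) (greedy_pos b)"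
    "point a - point b \<noteq> 1"
    using heights[OF _ assms(3)] by auto
qed

lemma point_mem: "point \<in> S_complement n G"
proof -
  have "point i \<noteq> point j \<and> point i - point j \<noteq> 1" if "1 \<le> i" "i < j" "j \<le> n" for i j
  proof -
    have ij: "i \<in> {1..n}" "j \<in> {1..n}" using that by auto
    then have "greedy_pos i \<noteq> greedy_pos j"
      using inj_onD[OF inj_on_pos[OF distinct_greedy_word], of i j] set_greedy_word that by auto
    then consider "greedy_pos i < greedy_pos j" | "greedy_pos j < greedy_pos i" by linarith
    then show ?thesis
    proof cases
      case 1
      then show ?thesis using point_diff[OF ij 1] by auto
    next
      case 2
      then show ?thesis using point_diff(1)[OF ij(2,1) 2] by auto
    qed
  qed
  then show ?thesis unfolding S_complement_def by (auto simp: point_def)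
qed

abbreviation region :: "nat set set \<Rightarrow> (nat \<Rightarrow> real) set" where
  "region G \<equiv> connected_component_set (S_complement n G) point"

lemma region_mem: "region G \<in> S_regions n G"
  unfolding S_regions_def using point_mem by blast

lemma region_word_eq: "region_word n (region G) = greedy_word"
proof -
  have x: "point \<in> region G" using point_mem by simp
  have "sorted_wrt (\<lambda>a b. point a > point b) greedy_word"
    unfolding sorted_wrt_iff_nth_less
  proof (intro allI impI)
    fix k l assume kl: "k < l" "l < length greedy_word"
    then have "greedy_word ! k \<in> set greedy_word" "greedy_word ! l \<in> set greedy_word" by simp_all
    then have mem: "greedy_word ! k \<in> {1..n}" "greedy_word ! l \<in> {1..n}" using set_greedy_word by simp_all
    have "greedy_pos (greedy_word ! k) < greedy_pos (greedy_word ! l)"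
      using pos_nth[OF distinct_greedy_word] kl by simp
    then show "point (greedy_word ! k) > point (greedy_word ! l)" by (rule point_diff(1)[OF mem])
  qed
  moreover have "set (region_word n (region G)) = set greedy_word"
    using region_word_sorted(1)[OF region_mem x] set_greedy_word by simp
  moreover have "inj_on point (set (region_word n (region G)))"
    using S_complement_inj_on[OF point_mem[of G]] region_word_sorted(1)[OF region_mem x] by simp
  ultimately show ?thesis using sorted_decreasing_unique region_word_sorted(2)[OF region_mem x] by blast
qed

lemma undominated_region_arcs:
  assumes G: "\<And>a b. (a, b) \<in> C \<Longrightarrow> {a, b} \<in> G"
  shows "undominated greedy_pos (region_arcs n G (region G)) = C"
proof -
  let ?A = "region_arcs n G (region G)"
  have x: "point \<in> region G" using point_mem by simp
  have S: "arc_system n greedy_pos ?A" using region_arc_system[OF region_mem] region_word_eq by simp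
  have arcs: "?A = {(i, l). 1 \<le> i \<and> i < l \<and> l \<le> n \<and> {i, l} \<in> G \<and> 1 < point i - point l}"
    by (rule region_arcs_eq[OF region_mem x])
  show ?thesis
  proof (rule arc_system.undominated_eq_if_dominating[OF S _ _ greedy_pos_antichain])
    show "C \<subseteq> ?A"
    proof
      fix p assume p: "p \<in> C"
      obtain a b where ab: "p = (a, b)" by fastforce
      have mem: "a \<in> {1..n}" "b \<in> {1..n}" "a < b" using p ab unfolding consecutive_pairs_def by auto
      have "contains_span (greedy_pos a) (greedy_pos b)" using p ab unfolding contains_span_def by blast
      then have "1 < point a - point b"
        using point_diff(2)[OF mem(1,2) greedy_pos_consecutive] p ab by simp
      then show "p \<in> ?A" using G p ab mem unfolding arcs by simp
    qed
    show "\<exists>(j, k) \<in> C. greedy_pos i \<le> greedy_pos j \<and> greedy_pos k \<le> greedy_pos l"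
      if il: "(i, l) \<in> ?A" for i l
    proof -
      have "i \<in> {1..n}" "l \<in> {1..n}" "greedy_pos i < greedy_pos l"
        using arc_system.arc_forward[OF S il] by auto
      moreover have "1 < point i - point l" using il unfolding arcs by simp
      ultimately have "contains_span (greedy_pos i) (greedy_pos l)" using point_diff(2) by blast
      then show ?thesis unfolding contains_span_def .
    qed
  qed
qed

lemma sigma_region:
  assumes "\<And>a b. (a, b) \<in> C \<Longrightarrow> {a, b} \<in> G"
  shows "sigma_nG n G (region G) = f"
proof -
  have "arc_system n greedy_pos (region_arcs n G (region G))"
    using region_arc_system[OF region_mem] region_word_eq by simp
  then have "chain_map n greedy_pos (region_arcs n G (region G)) = f"
    using undominated_region_arcs[OF assms] greedy_pos_level_min value_le_greedy_pos
    by (rule chain_map_eq_if_undominated_eq)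
  then show ?thesis unfolding sigma_nG_eq_chain_map region_word_eq .
qed

end

lemma G_parking_function_in_image:
  assumes f: "f \<in> G_parking_functions n G"
  shows "f \<in> sigma_nG n G ` S_regions n G"
proof -
  interpret parking n f using f unfolding G_parking_functions_def by unfold_locales blast
  have G: "{a, b} \<in> G" if "(a, b) \<in> consecutive_pairs n f" for a b
    using f consecutive_pairs_eq_Least[OF that] that
    unfolding G_parking_functions_def consecutive_pairs_def by auto
  obtain t :: "nat \<Rightarrow> real" where "\<forall>u v. 1 \<le> u \<longrightarrow> u < v \<longrightarrow> v \<le> n \<longrightarrow> t u < t v
      \<and> (contains_span u v \<longrightarrow> 1 < t v - t u) \<and> (\<not> contains_span u v \<longrightarrow> t v - t u < 1)"
    using staircase_realization[of contains_span n] contains_span_mono by blast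
  then interpret greedy_heights n f t by unfold_locales blast
  show ?thesis using sigma_region[OF G] region_mem by (metis image_eqI)
qed

theorem theorem3p1:
  fixes n :: nat and G :: "nat set set"
  assumes "n \<ge> 1" and "simple_graph_on n G"
  shows "bij_betw (sigma_nG n G) (S_regions n G) (G_parking_functions n G)"
proof -
  show ?thesis
    using sigma_nG_inj_on sigma_nG_G_parking G_parking_function_in_image
    unfolding bij_betw_def by blast
qed

end
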